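(* The group $G=\mathrm{SL}_3(\mathbb F_2)$ realizes $\langle 8,7,7\rangle$ via a TPP triple of subgroups, and consequently $\beta(\mathrm{SL}_3(\mathbb F_2))\ge 392=\frac{7}{3}|\mathrm{SL}_3(\mathbb F_2)|$.
   Context: For a nonempty subset $X$ of a group $G$, $Q(X):=\{xy^{-1}: x,y\in X\}$. Nonempty subsets $S_1,S_2,S_3$ of $G$ satisfy the Triple Product Property (TPP) if for all $s_i\in Q(S_i)$: $s_1s_2s_3=1$ iff $s_1=s_2=s_3=1$. A group $G$ realizes $\langle n,p,m\rangle$ if there are subsets $S_1,S_2,S_3\subseteq G$ with $|S_1|=n$, $|S_2|=p$, $|S_3|=m$ satisfying the TPP; it does so via a TPP triple of subgroups if the $S_i$ can be chosen to be subgroups. For a nontrivial finite group $G$, $\beta(G):=\max\{npm : G \text{ realizes } \langle n,p,m\rangle\}$. Here $|\mathrm{SL}_3(\mathbb F_2)|=168$. *)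

theory Defs
  imports "HOL-Analysis.Analysis" "HOL-Algebra.Group" "HOL-Library.Z2"
begin

definition Qset :: "('a, 'b) monoid_scheme \<Rightarrow> 'a set \<Rightarrow> 'a set" where
  "Qset G X = {x \<otimes>\<^bsub>G\<^esub> inv\<^bsub>G\<^esub> y | x y. x \<in> X \<and> y \<in> X}"

definition TPP :: "('a, 'b) monoid_scheme \<Rightarrow> 'a set \<Rightarrow> 'a set \<Rightarrow> 'a set \<Rightarrow> bool" where
  "TPP G S1 S2 S3 \<longleftrightarrow>
     S1 \<noteq> {} \<and> S2 \<noteq> {} \<and> S3 \<noteq> {} \<and>
     S1 \<subseteq> carrier G \<and> S2 \<subseteq> carrier G \<and> S3 \<subseteq> carrier G \<and>
     (\<forall>s1\<in>Qset G S1. \<forall>s2\<in>Qset G S2. \<forall>s3\<in>Qset G S3.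
        (s1 \<otimes>\<^bsub>G\<^esub> s2 \<otimes>\<^bsub>G\<^esub> s3 = \<one>\<^bsub>G\<^esub>) \<longleftrightarrow>
        (s1 = \<one>\<^bsub>G\<^esub> \<and> s2 = \<one>\<^bsub>G\<^esub> \<and> s3 = \<one>\<^bsub>G\<^esub>))"

definition realizes :: "('a, 'b) monoid_scheme \<Rightarrow> nat \<Rightarrow> nat \<Rightarrow> nat \<Rightarrow> bool" where
  "realizes G n p m \<longleftrightarrow>
     (\<exists>S1 S2 S3. card S1 = n \<and> card S2 = p \<and> card S3 = m \<and> TPP G S1 S2 S3)"

definition realizes_subgroups :: "('a, 'b) monoid_scheme \<Rightarrow> nat \<Rightarrow> nat \<Rightarrow> nat \<Rightarrow> bool" where
  "realizes_subgroups G n p m \<longleftrightarrow>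
     (\<exists>S1 S2 S3. subgroup S1 G \<and> subgroup S2 G \<and> subgroup S3 G \<and>
        card S1 = n \<and> card S2 = p \<and> card S3 = m \<and> TPP G S1 S2 S3)"

definition beta :: "('a, 'b) monoid_scheme \<Rightarrow> nat" where
  "beta G = Max {n * p * m | n p m. realizes G n p m}"

definition SL3F2 :: "(bit ^ 3 ^ 3) monoid" where
  "SL3F2 = \<lparr>carrier = {A. det A = 1}, mult = (\<lambda>A B. A ** B), one = mat 1\<rparr>"

end

theory Submission
  imports Defs "HOL-Algebra.Multiplicative_Group"
begin

text \<open>For subgroups the quotient sets \<open>Q(H\<^sub>i)\<close> are the subgroups themselves, so the triple
  product property only asks that \<open>a b c = 1\<close> with \<open>a, b, c\<close> taken from the three subgroups
  forces \<open>a = b = c = 1\<close>. For the upper unitriangular matrices (order 8) and two cyclic subgroups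
  of order 7 this is a finite check of 392 products, done by evaluation; the same evaluation counts
  the 168 elements of \<open>SL\<^sub>3(\<bbbF>\<^sub>2)\<close>. Since \<open>\<beta>\<close> is a maximum over a set bounded by
  \<open>|G|\<^sup>3\<close>, it is at least \<open>8 \<cdot> 7 \<cdot> 7 = 392\<close>.\<close>

lemma (in group) subgroup_of_finite_closed:
  assumes fin: "finite (carrier G)"
    and H: "H \<subseteq> carrier G" "H \<noteq> {}" "\<And>x y. x \<in> H \<Longrightarrow> y \<in> H \<Longrightarrow> x \<otimes> y \<in> H"
  shows "subgroup H G"
proof (rule subgroupI)
  have pow_closed: "x [^] Suc n \<in> H" if "x \<in> H" for x n
    using that H by (induction n) auto
  fix x assume x: "x \<in> H"
  then have xG: "x \<in> carrier G" using H by blast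
  have ord_pos: "1 \<le> ord x"
    by (rule ord_ge_1[OF fin xG])
  \<comment> \<open>exponent \<open>2 ord x - 1\<close> rather than \<open>ord x - 1\<close>: it stays positive when \<open>x = \<one>\<close>\<close>
  have "x [^] (2 * ord x - 1) \<otimes> x = x [^] Suc (2 * ord x - 1)"
    using xG by simp
  also have "\<dots> = (x [^] ord x) [^] (2::nat)"
    using ord_pos nat_pow_pow[OF xG, of "ord x" 2] by (simp add: mult.commute)
  also have "\<dots> = \<one>"
    using xG by simp
  finally have "inv x = x [^] (2 * ord x - 1)"
    using xG by (simp add: inv_equality)
  also have "\<dots> \<in> H"
    using pow_closed[OF x, of "2 * ord x - 2"] ord_pos
    by (simp add: Suc_diff_Suc numeral_2_eq_2)
  finally show "inv x \<in> H" .
qed (use H in auto)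

lemma (in group) Qset_subgroup:
  assumes "subgroup H G"
  shows "Qset G H = H"
proof
  show "Qset G H \<subseteq> H"
    unfolding Qset_def using subgroup.m_closed[OF assms] subgroup.m_inv_closed[OF assms] by blast
  show "H \<subseteq> Qset G H"
  proof
    fix x assume "x \<in> H"
    moreover have "x = x \<otimes> inv \<one>"
      using subgroup.mem_carrier[OF assms \<open>x \<in> H\<close>] by simp
    ultimately show "x \<in> Qset G H"
      unfolding Qset_def using subgroup.one_closed[OF assms] by blast
  qed
qed

lemma (in group) TPP_subgroups_iff:
  assumes "subgroup H1 G" "subgroup H2 G" "subgroup H3 G"
  shows "TPP G H1 H2 H3 \<longleftrightarrow>
    (\<forall>a\<in>H1. \<forall>b\<in>H2. \<forall>c\<in>H3. a \<otimes> b \<otimes> c = \<one> \<longrightarrow> a = \<one> \<and> b = \<one> \<and> c = \<one>)"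
proof -
  have "H1 \<noteq> {}" "H2 \<noteq> {}" "H3 \<noteq> {}" "H1 \<subseteq> carrier G" "H2 \<subseteq> carrier G" "H3 \<subseteq> carrier G"
    using assms subgroup.one_closed subgroup.subset by blast+
  moreover have "\<one> \<otimes> \<one> \<otimes> \<one> = \<one>"
    by simp
  ultimately show ?thesis
    unfolding TPP_def Qset_subgroup[OF assms(1)] Qset_subgroup[OF assms(2)] Qset_subgroup[OF assms(3)]
    by blast
qed

lemma realizes_subgroups_imp_realizes:
  "realizes_subgroups G n p m \<Longrightarrow> realizes G n p m"
  unfolding realizes_subgroups_def realizes_def by blast

lemma realizes_le_beta:
  assumes fin: "finite (carrier G)" and "realizes G n p m"
  shows "n * p * m \<le> beta G"
proof -
  let ?N = "card (carrier G)"
  have le_cube: "n * p * m \<le> ?N * ?N * ?N" if "realizes G n p m" for n p m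
  proof -
    from that obtain S1 S2 S3 where cards: "card S1 = n" "card S2 = p" "card S3 = m"
      and "TPP G S1 S2 S3"
      unfolding realizes_def by blast
    then have "S1 \<subseteq> carrier G" "S2 \<subseteq> carrier G" "S3 \<subseteq> carrier G"
      by (simp_all add: TPP_def)
    then have "n \<le> ?N" "p \<le> ?N" "m \<le> ?N"
      using card_mono[OF fin] cards by auto
    then show ?thesis
      by (simp add: mult_le_mono)
  qed
  have bounded: "{n * p * m | n p m. realizes G n p m} \<subseteq> {..?N * ?N * ?N}"
    using le_cube by blast
  have "n * p * m \<in> {n * p * m | n p m. realizes G n p m}"
    using assms(2) by blast
  then show ?thesis
    unfolding beta_def by (rule Max_ge[OF finite_subset[OF bounded finite_atMost]])
qed

lemma SL3F2_simps:
  "carrier SL3F2 = {A. det A = 1}" "x \<otimes>\<^bsub>SL3F2\<^esub> y = x ** y" "\<one>\<^bsub>SL3F2\<^esub> = mat 1"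
  by (simp_all add: SL3F2_def)

lemma group_SL3F2: "group SL3F2"
proof (rule groupI)
  fix x assume x: "x \<in> carrier SL3F2"
  then have "invertible x"
    by (simp add: SL3F2_simps invertible_det_nz)
  then obtain y where y: "y ** x = mat 1"
    using invertible_left_inverse by blast
  then have "det y * det x = 1"
    by (metis det_mul det_I)
  then have "det y = 1"
    using x by (simp add: SL3F2_simps)
  with y show "\<exists>y\<in>carrier SL3F2. y \<otimes>\<^bsub>SL3F2\<^esub> x = \<one>\<^bsub>SL3F2\<^esub>"
    by (auto simp: SL3F2_simps)
qed (auto simp: SL3F2_simps det_mul matrix_mul_assoc)

text \<open>Matrices are given as lists of rows so that the finite checks below can be
  run by \<open>code_simp\<close>; \<open>mat_of_rows\<close> transfers the results to \<open>bit^3^3\<close>.\<close>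

definition mat_of_rows :: "'a::zero list list \<Rightarrow> 'a^3^3" where
  "mat_of_rows A = vector (map vector A)"

definition is_3x3 :: "'a list list \<Rightarrow> bool" where
  "is_3x3 A \<longleftrightarrow> length A = 3 \<and> (\<forall>r\<in>set A. length r = 3)"

definition rows_mult :: "'a::semiring_0 list list \<Rightarrow> 'a list list \<Rightarrow> 'a list list" where
  "rows_mult A B = map (\<lambda>r. map (\<lambda>c. sum_list (map2 (*) r c)) (List.transpose B)) A"

definition rows_det3 :: "'a::comm_ring_1 list list \<Rightarrow> 'a" where
  "rows_det3 A = (let e = \<lambda>i j. A ! i ! j in
     e 0 0 * e 1 1 * e 2 2 + e 0 1 * e 1 2 * e 2 0 + e 0 2 * e 1 0 * e 2 1
   - e 0 0 * e 1 2 * e 2 1 - e 0 1 * e 1 0 * e 2 2 - e 0 2 * e 1 1 * e 2 0)"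

definition rows_one :: "'a::zero_neq_one list list" where
  "rows_one = [[1, 0, 0], [0, 1, 0], [0, 0, 1]]"

lemma is_3x3_cases:
  assumes "is_3x3 A"
  obtains a b c d e f g h k where "A = [[a, b, c], [d, e, f], [g, h, k]]"
  using assms by (auto simp: is_3x3_def numeral_eq_Suc length_Suc_conv)

lemma is_3x3_rows_mult: "is_3x3 A \<Longrightarrow> is_3x3 B \<Longrightarrow> is_3x3 (rows_mult A B)"
  by (elim is_3x3_cases) (simp add: is_3x3_def rows_mult_def)

lemma mat_of_rows_mult:
  fixes A B :: "'a::semiring_1 list list"
  assumes "is_3x3 A" "is_3x3 B"
  shows "mat_of_rows (rows_mult A B) = mat_of_rows A ** mat_of_rows B"
  using assms by (elim is_3x3_cases)
    (simp add: rows_mult_def mat_of_rows_def vec_eq_iff forall_3 matrix_matrix_mult_def sum_3 add.assoc)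

lemma det_mat_of_rows:
  fixes A :: "'a::comm_ring_1 list list"
  assumes "is_3x3 A"
  shows "det (mat_of_rows A) = rows_det3 A"
  using assms by (elim is_3x3_cases) (simp add: det_3 mat_of_rows_def rows_det3_def)

lemma mat_of_rows_one: "mat_of_rows rows_one = (mat 1 :: 'a::zero_neq_one^3^3)"
  by (simp add: rows_one_def mat_of_rows_def vec_eq_iff forall_3 mat_def)

lemma is_3x3_rows_one: "is_3x3 rows_one"
  by (simp add: rows_one_def is_3x3_def)

lemma mat_of_rows_entries: "mat_of_rows [[M$1$1, M$1$2, M$1$3], [M$2$1, M$2$2, M$2$3], [M$3$1, M$3$2, M$3$3]] = M"
  by (simp add: mat_of_rows_def vec_eq_iff forall_3)

lemma inj_on_mat_of_rows: "inj_on mat_of_rows {A. is_3x3 A}"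
proof (rule inj_onI, clarsimp)
  fix A B :: "'a list list"
  assume "is_3x3 A" "is_3x3 B" "mat_of_rows A = mat_of_rows B"
  then show "A = B"
    by (elim is_3x3_cases) (simp add: mat_of_rows_def vec_eq_iff forall_3)
qed

lemma mat_of_rows_eq_iff: "is_3x3 A \<Longrightarrow> is_3x3 B \<Longrightarrow> mat_of_rows A = mat_of_rows B \<longleftrightarrow> A = B"
  using inj_on_mat_of_rows by (auto dest: inj_onD)

lemma card_mat_of_rows:
  assumes "\<forall>A\<in>set L. is_3x3 A" "distinct L"
  shows "card (mat_of_rows ` set L) = length L"
  using assms by (subst card_image) (auto intro: inj_on_subset[OF inj_on_mat_of_rows] distinct_card)

definition all_rows :: "bit list list list" where
  "all_rows = List.n_lists 3 (List.n_lists 3 [0, 1])"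

lemma is_3x3_all_rows: "A \<in> set all_rows \<Longrightarrow> is_3x3 A"
  by (auto simp: all_rows_def set_n_lists is_3x3_def)

lemma carrier_SL3F2_rows: "carrier SL3F2 = mat_of_rows ` {A \<in> set all_rows. rows_det3 A = 1}"
proof safe
  fix M assume M: "M \<in> carrier SL3F2"
  define A where "A = [[M$1$1, M$1$2, M$1$3], [M$2$1, M$2$2, M$2$3], [M$3$1, M$3$2, M$3$3]]"
  have A: "A \<in> set all_rows"
    unfolding A_def all_rows_def by (auto simp: set_n_lists)
  have "mat_of_rows A = M"
    unfolding A_def by (rule mat_of_rows_entries)
  moreover from this have "rows_det3 A = 1"
    using M det_mat_of_rows[OF is_3x3_all_rows[OF A]] by (simp add: SL3F2_simps)
  ultimately show "M \<in> mat_of_rows ` {A \<in> set all_rows. rows_det3 A = 1}"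
    using A by blast
qed (simp add: SL3F2_simps det_mat_of_rows is_3x3_all_rows)

lemma card_SL3F2: "card (carrier SL3F2) = 168"
proof -
  have "card (carrier SL3F2) = length (filter (\<lambda>A. rows_det3 A = 1) all_rows)"
    unfolding carrier_SL3F2_rows
    by (subst card_mat_of_rows[symmetric]) (auto simp: is_3x3_all_rows all_rows_def distinct_n_lists)
  also have "\<dots> = 168"
    unfolding all_rows_def by code_simp
  finally show ?thesis .
qed

lemma finite_carrier_SL3F2: "finite (carrier SL3F2)"
  using card_SL3F2 by (intro card_ge_0_finite) simp

lemma subgroup_SL3F2_rows:
  assumes "\<forall>A\<in>set L. is_3x3 A \<and> rows_det3 A = 1" "L \<noteq> []"
    and "\<forall>A\<in>set L. \<forall>B\<in>set L. rows_mult A B \<in> set L"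
  shows "subgroup (mat_of_rows ` set L) SL3F2"
proof (rule group.subgroup_of_finite_closed[OF group_SL3F2 finite_carrier_SL3F2])
  show "mat_of_rows ` set L \<subseteq> carrier SL3F2"
    using assms(1) by (auto simp: SL3F2_simps det_mat_of_rows)
  show "mat_of_rows ` set L \<noteq> {}"
    using assms(2) by simp
  show "x \<otimes>\<^bsub>SL3F2\<^esub> y \<in> mat_of_rows ` set L"
    if "x \<in> mat_of_rows ` set L" "y \<in> mat_of_rows ` set L" for x y
    using that assms(1,3) by (auto simp: SL3F2_simps mat_of_rows_mult[symmetric])
qed

definition unitriangular_rows :: "bit list list list" where
  "unitriangular_rows =
    [[[1, 0, 0], [0, 1, 0], [0, 0, 1]],
     [[1, 0, 0], [0, 1, 1], [0, 0, 1]],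
     [[1, 0, 1], [0, 1, 0], [0, 0, 1]],
     [[1, 0, 1], [0, 1, 1], [0, 0, 1]],
     [[1, 1, 0], [0, 1, 0], [0, 0, 1]],
     [[1, 1, 0], [0, 1, 1], [0, 0, 1]],
     [[1, 1, 1], [0, 1, 0], [0, 0, 1]],
     [[1, 1, 1], [0, 1, 1], [0, 0, 1]]]"

definition cyclic_rows_1 :: "bit list list list" where
  "cyclic_rows_1 =
    [[[0, 0, 1], [1, 0, 1], [0, 1, 0]],
     [[0, 1, 0], [0, 1, 1], [1, 0, 1]],
     [[0, 1, 1], [1, 1, 0], [1, 1, 1]],
     [[1, 0, 0], [0, 1, 0], [0, 0, 1]],
     [[1, 0, 1], [1, 1, 1], [0, 1, 1]],
     [[1, 1, 0], [0, 0, 1], [1, 0, 0]],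
     [[1, 1, 1], [1, 0, 0], [1, 1, 0]]]"

definition cyclic_rows_2 :: "bit list list list" where
  "cyclic_rows_2 =
    [[[0, 0, 1], [1, 0, 1], [1, 1, 1]],
     [[0, 1, 0], [0, 0, 1], [1, 0, 1]],
     [[0, 1, 1], [1, 0, 0], [0, 1, 0]],
     [[1, 0, 0], [0, 1, 0], [0, 0, 1]],
     [[1, 0, 1], [1, 1, 1], [1, 1, 0]],
     [[1, 1, 0], [0, 1, 1], [1, 0, 0]],
     [[1, 1, 1], [1, 1, 0], [0, 1, 1]]]"

lemma subgroup_unitriangular: "subgroup (mat_of_rows ` set unitriangular_rows) SL3F2"
  by (rule subgroup_SL3F2_rows) code_simp+

lemma subgroup_cyclic_1: "subgroup (mat_of_rows ` set cyclic_rows_1) SL3F2"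
  by (rule subgroup_SL3F2_rows) code_simp+

lemma subgroup_cyclic_2: "subgroup (mat_of_rows ` set cyclic_rows_2) SL3F2"
  by (rule subgroup_SL3F2_rows) code_simp+

lemma card_unitriangular: "card (mat_of_rows ` set unitriangular_rows) = 8"
  by (subst card_mat_of_rows) code_simp+

lemma card_cyclic_1: "card (mat_of_rows ` set cyclic_rows_1) = 7"
  by (subst card_mat_of_rows) code_simp+

lemma card_cyclic_2: "card (mat_of_rows ` set cyclic_rows_2) = 7"
  by (subst card_mat_of_rows) code_simp+

lemma TPP_unitriangular_cyclic:
  "TPP SL3F2 (mat_of_rows ` set unitriangular_rows) (mat_of_rows ` set cyclic_rows_1)
     (mat_of_rows ` set cyclic_rows_2)"
proof -
  have shapes: "\<forall>A \<in> set unitriangular_rows \<union> set cyclic_rows_1 \<union> set cyclic_rows_2. is_3x3 A"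
    by code_simp
  have trivial_products: "\<forall>A\<in>set unitriangular_rows. \<forall>B\<in>set cyclic_rows_1. \<forall>C\<in>set cyclic_rows_2.
      rows_mult (rows_mult A B) C = rows_one \<longrightarrow> A = rows_one \<and> B = rows_one \<and> C = rows_one"
    by code_simp
  have "A = rows_one \<and> B = rows_one \<and> C = rows_one"
    if "A \<in> set unitriangular_rows" "B \<in> set cyclic_rows_1" "C \<in> set cyclic_rows_2"
      and "mat_of_rows A ** mat_of_rows B ** mat_of_rows C = mat 1" for A B C
    using that shapes trivial_products
    by (simp add: mat_of_rows_mult[symmetric] mat_of_rows_one[symmetric] mat_of_rows_eq_iff
        is_3x3_rows_mult is_3x3_rows_one)
  then show ?thesis
    by (auto simp: group.TPP_subgroups_iff[OF group_SL3F2 subgroup_unitriangular subgroup_cyclic_1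
        subgroup_cyclic_2] SL3F2_simps mat_of_rows_one[symmetric])
qed

theorem mainTheorem7:
  shows "realizes_subgroups SL3F2 8 7 7 \<and> beta SL3F2 \<ge> 392 \<and>
         real 392 = 7 / 3 * real (card (carrier SL3F2))"
proof -
  have realizes: "realizes_subgroups SL3F2 8 7 7"
    unfolding realizes_subgroups_def
    using subgroup_unitriangular subgroup_cyclic_1 subgroup_cyclic_2
      card_unitriangular card_cyclic_1 card_cyclic_2 TPP_unitriangular_cyclic
    by blast
  then have "8 * 7 * 7 \<le> beta SL3F2"
    by (intro realizes_le_beta finite_carrier_SL3F2 realizes_subgroups_imp_realizes)
  then show ?thesis
    using realizes by (simp add: card_SL3F2)
qed

end
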